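(* Let $m>1$, $D>0$ and $r\ge 0$, and let $b,d$ satisfy the standing assumptions below. Then there exists a constant $\dot c=\dot c(m,r,b,d)>0$, depending on $m$, $r$ and the structure of $b(\cdot),d(\cdot)$, such that for every $c\in(0,\dot c)$ the wave profile equation $$c\phi'(t)=D(\phi^m)''(t)-d(\phi(t))+b(\phi(t-cr)),\qquad t\in\mathbb R,$$ admits no wave solution (neither semi-wavefront nor wavefront, neither sharp nor smooth). Moreover, $$\dot c(m,r,b,d)=\frac{\mu_0(m,b(\cdot),d(\cdot))+o(1)}{r},\qquad r\to+\infty,$$ for some constant $\mu_0(m,b(\cdot),d(\cdot))>0$ not depending on $r$.
   Context: Standing assumptions: the death rate $d\in C^2([0,+\infty))$ satisfies $d(0)=0$, $d'(s)>0$ and $d''(s)\ge0$ for $s>0$. The birth rate $b\in C^1([0,+\infty);[0,+\infty))$ has exactly one positive local extremum point $s_M$, which is its global maximum point; $b(0)=0$; there is $\kappa>0$ with $b(\kappa)=d(\kappa)$; $b'(0)>d'(0)$; $b'(\kappa)<d'(\kappa)$; and $d(s)<b(s)\le b'(0)s$ for $s\in(0,\kappa)$. Moreover $s_M<\kappa$. Definitions: a function $0\le\phi\in W^{1,1}_{\rm loc}(\mathbb R)\cap L^\infty(\mathbb R)$ with $\phi^m\in W^{1,1}_{\rm loc}(\mathbb R)$ is a semi-wavefront (of speed $c>0$) if (i) it satisfies the wave profile equation in the sense of distributions; (ii) $\phi(-\infty)=0$ and $0<\liminf_{t\to+\infty}\phi(t)\le\limsup_{t\to+\infty}\phi(t)<+\infty$;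 (iii) there is a maximal interval $(-\infty,t_0)$, $t_0\in(-\infty,+\infty]$, on which $\phi$ is monotonically increasing, and if $t_0<+\infty$ then $\phi(t_0)>\kappa$. A wavefront is a semi-wavefront with $\phi(+\infty)=\kappa$. A wave solution means a semi-wavefront or wavefront. It is sharp if there is $t_*\in\mathbb R$ with $\phi(t)=0$ for $t\le t_*$ and $\phi(t)>0$ for $t>t_*$, and smooth if $\phi(t)>0$ for all $t$. *)

theory Defs
  imports "HOL-Analysis.Analysis"
begin

definition death_rate_assms ::
  "(real \<Rightarrow> real) \<Rightarrow> (real \<Rightarrow> real) \<Rightarrow> (real \<Rightarrow> real) \<Rightarrow> bool" where
  "death_rate_assms d d1 d2 \<longleftrightarrow>
     (\<forall>s\<ge>0. (d has_real_derivative d1 s) (at s within {0..})) \<and>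
     (\<forall>s\<ge>0. (d1 has_real_derivative d2 s) (at s within {0..})) \<and>
     continuous_on {0..} d2 \<and>
     d 0 = 0 \<and> (\<forall>s>0. d1 s > 0) \<and> (\<forall>s>0. d2 s \<ge> 0)"

definition loc_max_at :: "(real \<Rightarrow> real) \<Rightarrow> real \<Rightarrow> bool" where
  "loc_max_at f x \<longleftrightarrow> (\<exists>\<delta>>0. \<forall>y. \<bar>y - x\<bar> < \<delta> \<longrightarrow> f y \<le> f x)"

definition loc_min_at :: "(real \<Rightarrow> real) \<Rightarrow> real \<Rightarrow> bool" where
  "loc_min_at f x \<longleftrightarrow> (\<exists>\<delta>>0. \<forall>y. \<bar>y - x\<bar> < \<delta> \<longrightarrow> f x \<le> f y)"

definition birth_rate_assms ::
  "(real \<Rightarrow> real) \<Rightarrow> (real \<Rightarrow> real) \<Rightarrow> (real \<Rightarrow> real) \<Rightarrow> (real \<Rightarrow> real)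
     \<Rightarrow> real \<Rightarrow> real \<Rightarrow> bool" where
  "birth_rate_assms b b1 d d1 \<kappa> sM \<longleftrightarrow>
     (\<forall>s\<ge>0. (b has_real_derivative b1 s) (at s within {0..})) \<and>
     continuous_on {0..} b1 \<and>
     (\<forall>s\<ge>0. b s \<ge> 0) \<and>
     sM > 0 \<and> (loc_max_at b sM \<or> loc_min_at b sM) \<and>
     (\<forall>x>0. (loc_max_at b x \<or> loc_min_at b x) \<longrightarrow> x = sM) \<and>
     (\<forall>s\<ge>0. b s \<le> b sM) \<and>
     b 0 = 0 \<and> \<kappa> > 0 \<and> b \<kappa> = d \<kappa> \<and>
     b1 0 > d1 0 \<and> b1 \<kappa> < d1 \<kappa> \<and>
     (\<forall>s. 0 < s \<and> s < \<kappa> \<longrightarrow> d s < b s \<and> b s \<le> b1 0 * s) \<and>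
     sM < \<kappa>"

definition test_fun :: "(real \<Rightarrow> real) \<Rightarrow> bool" where
  "test_fun \<psi> \<longleftrightarrow> (\<forall>k x. ((deriv ^^ k) \<psi>) differentiable (at x)) \<and>
                    (\<exists>a b. \<forall>x. x \<notin> {a..b} \<longrightarrow> \<psi> x = 0)"

definition loc_integrable :: "(real \<Rightarrow> real) \<Rightarrow> bool" where
  "loc_integrable f \<longleftrightarrow> (\<forall>a b. set_integrable lborel {a..b} f)"

definition W11_loc :: "(real \<Rightarrow> real) \<Rightarrow> bool" where
  "W11_loc f \<longleftrightarrow> loc_integrable f \<and>
     (\<exists>g. loc_integrable g \<and>
        (\<forall>\<psi>. test_fun \<psi> \<longrightarrow>
           (\<integral>t. f t * deriv \<psi> t \<partial>lborel) = - (\<integral>t. g t * \<psi> t \<partial>lborel)))"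

definition wave_eq_distr ::
  "real \<Rightarrow> real \<Rightarrow> (real \<Rightarrow> real) \<Rightarrow> (real \<Rightarrow> real) \<Rightarrow> real \<Rightarrow> real
     \<Rightarrow> (real \<Rightarrow> real) \<Rightarrow> bool" where
  "wave_eq_distr m D b d c r \<phi> \<longleftrightarrow>
     (\<forall>\<psi>. test_fun \<psi> \<longrightarrow>
        (\<integral>t. - c * \<phi> t * deriv \<psi> t \<partial>lborel) =
        (\<integral>t. D * (\<phi> t powr m) * deriv (deriv \<psi>) t - d (\<phi> t) * \<psi> t
               + b (\<phi> (t - c * r)) * \<psi> t \<partial>lborel))"

text \<open>phi is identified with its continuous representative (phi is in W^{1,1}_loc).\<close>
definition semi_wavefront ::
  "real \<Rightarrow> real \<Rightarrow> (real \<Rightarrow> real) \<Rightarrow> (real \<Rightarrow> real) \<Rightarrow> real \<Rightarrow> real \<Rightarrow> real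
     \<Rightarrow> (real \<Rightarrow> real) \<Rightarrow> bool" where
  "semi_wavefront m D b d \<kappa> c r \<phi> \<longleftrightarrow>
     c > 0 \<and>
     continuous_on UNIV \<phi> \<and> (\<forall>t. 0 \<le> \<phi> t) \<and> bounded (range \<phi>) \<and>
     W11_loc \<phi> \<and> W11_loc (\<lambda>t. \<phi> t powr m) \<and>
     wave_eq_distr m D b d c r \<phi> \<and>
     (\<phi> \<longlongrightarrow> 0) at_bot \<and>
     (\<exists>\<epsilon>>0. \<forall>\<^sub>F t in at_top. \<epsilon> \<le> \<phi> t) \<and>
     (\<exists>M. \<forall>\<^sub>F t in at_top. \<phi> t \<le> M) \<and>
     (\<exists>t0::ereal. t0 \<noteq> -\<infinity> \<and>
        mono_on {t. ereal t < t0} \<phi> \<and>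
        (\<forall>t1::ereal. t0 < t1 \<longrightarrow> \<not> mono_on {t. ereal t < t1} \<phi>) \<and>
        (t0 \<noteq> \<infinity> \<longrightarrow> \<phi> (real_of_ereal t0) > \<kappa>))"

definition wavefront ::
  "real \<Rightarrow> real \<Rightarrow> (real \<Rightarrow> real) \<Rightarrow> (real \<Rightarrow> real) \<Rightarrow> real \<Rightarrow> real \<Rightarrow> real
     \<Rightarrow> (real \<Rightarrow> real) \<Rightarrow> bool" where
  "wavefront m D b d \<kappa> c r \<phi> \<longleftrightarrow>
     semi_wavefront m D b d \<kappa> c r \<phi> \<and> (\<phi> \<longlongrightarrow> \<kappa>) at_top"

definition wave_solution ::
  "real \<Rightarrow> real \<Rightarrow> (real \<Rightarrow> real) \<Rightarrow> (real \<Rightarrow> real) \<Rightarrow> real \<Rightarrow> real \<Rightarrow> real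
     \<Rightarrow> (real \<Rightarrow> real) \<Rightarrow> bool" where
  "wave_solution m D b d \<kappa> c r \<phi> \<longleftrightarrow>
     semi_wavefront m D b d \<kappa> c r \<phi> \<or> wavefront m D b d \<kappa> c r \<phi>"

end

theory Submission
  imports Defs
begin

text \<open>
  Testing the equation against second derivatives of test functions and applying the
  du Bois-Reymond lemma for second derivatives shows that a wave profile \<open>\<phi>\<close> has
  \<open>D (\<phi>\<^sup>m)' = c \<phi> - \<integral>(b(\<phi>(\<cdot> - c r)) - d(\<phi>)) - \<alpha>\<close>. Near \<open>0\<close> the rates satisfy
  \<open>b s - d s \<ge> k s\<close> and \<open>b s \<le> B s\<close> for \<open>s \<le> v0\<close>. On the initial interval where \<open>\<phi>\<close>
  increases and stays below \<open>v0\<close>, integrating the equation bounds both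
  \<open>D (\<phi>\<^sup>m)'\<close> and \<open>k \<integral>\<phi>\<close> by \<open>C \<phi>\<close> up to terms that vanish at \<open>-\<infinity>\<close>, where
  \<open>C = c (1 + r B)\<close>; hence \<open>k D \<phi>\<^sup>m \<le> C\<^sup>2 \<phi>\<close> there. As \<open>\<phi>\<close> reaches the level \<open>v0\<close>
  before it stops increasing, \<open>k D v0 powr (m - 1) \<le> C\<^sup>2\<close>. So no wave exists for
  \<open>c < \<mu> / (1 + r B)\<close> with \<open>\<mu> = sqrt (k D v0 powr (m - 1))\<close>, and \<open>r\<close> times this bound
  tends to \<open>\<mu> / B\<close>.
\<close>

section \<open>Smooth bump functions\<close>

fun times_differentiable :: "nat \<Rightarrow> (real \<Rightarrow> real) \<Rightarrow> bool" where
  "times_differentiable 0 f \<longleftrightarrow> True"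
| "times_differentiable (Suc n) f \<longleftrightarrow>
     (\<exists>f'. (\<forall>x. (f has_real_derivative f' x) (at x)) \<and> times_differentiable n f')"

definition smooth :: "(real \<Rightarrow> real) \<Rightarrow> bool" where
  "smooth f \<longleftrightarrow> (\<forall>n. times_differentiable n f)"

lemma times_differentiable_SucI:
  "(\<And>x. (f has_real_derivative f' x) (at x)) \<Longrightarrow> times_differentiable n f' \<Longrightarrow>
     times_differentiable (Suc n) f"
  by auto

lemma times_differentiable_SucD: "times_differentiable (Suc n) f \<Longrightarrow> times_differentiable n f"
proof (induction n arbitrary: f)
  case (Suc n)
  then obtain f' where "\<forall>x. (f has_real_derivative f' x) (at x)" "times_differentiable (Suc n) f'"
    by auto
  with Suc.IH[of f'] show ?case by auto
qed simp

lemma times_differentiable_const: "times_differentiable n (\<lambda>x. c)"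
  by (induction n arbitrary: c) (auto intro!: exI[of _ "\<lambda>x. 0"] derivative_intros)

lemma times_differentiable_add:
  "times_differentiable n f \<Longrightarrow> times_differentiable n g \<Longrightarrow> times_differentiable n (\<lambda>x. f x + g x)"
proof (induction n arbitrary: f g)
  case (Suc n)
  then obtain f' g' where "\<forall>x. (f has_real_derivative f' x) (at x)" "times_differentiable n f'"
    "\<forall>x. (g has_real_derivative g' x) (at x)" "times_differentiable n g'" by auto
  with Suc.IH[of f' g'] show ?case
    by (auto intro!: exI[of _ "\<lambda>x. f' x + g' x"] derivative_intros)
qed simp

lemma times_differentiable_mult:
  "times_differentiable n f \<Longrightarrow> times_differentiable n g \<Longrightarrow> times_differentiable n (\<lambda>x. f x * g x)"
proof (induction n arbitrary: f g)
  case (Suc n)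
  from Suc.prems obtain f' g' where
    f': "\<forall>x. (f has_real_derivative f' x) (at x)" "times_differentiable n f'" and
    g': "\<forall>x. (g has_real_derivative g' x) (at x)" "times_differentiable n g'" by auto
  have "times_differentiable n f" "times_differentiable n g"
    using Suc.prems times_differentiable_SucD by auto
  then have "times_differentiable n (\<lambda>x. f' x * g x + f x * g' x)"
    using Suc.IH f' g' by (intro times_differentiable_add) auto
  moreover have "((\<lambda>x. f x * g x) has_real_derivative f' x * g x + f x * g' x) (at x)" for x
    using f' g' by (auto intro!: derivative_eq_intros)
  ultimately show ?case by (intro times_differentiable_SucI)
qed simp

lemma times_differentiable_diff:
  "times_differentiable n f \<Longrightarrow> times_differentiable n g \<Longrightarrow> times_differentiable n (\<lambda>x. f x - g x)"
  using times_differentiable_add[of n f "\<lambda>x. (-1) * g x"]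
    times_differentiable_mult[OF times_differentiable_const, of n g "-1"] by simp

lemma times_differentiable_affine:
  "times_differentiable n f \<Longrightarrow> times_differentiable n (\<lambda>x. f (a * x + b))"
proof (induction n arbitrary: f)
  case (Suc n)
  then obtain f' where f': "\<forall>x. (f has_real_derivative f' x) (at x)" "times_differentiable n f'"
    by auto
  have "times_differentiable n (\<lambda>x. a * f' (a * x + b))"
    using Suc.IH[OF f'(2)] by (intro times_differentiable_mult times_differentiable_const)
  moreover have "((\<lambda>x. f (a * x + b)) has_real_derivative a * f' (a * x + b)) (at x)" for x
  proof -
    have "((\<lambda>x. a * x + b) has_real_derivative a) (at x)" by (auto intro!: derivative_eq_intros)
    with DERIV_chain2 f'(1) show ?thesis by (fastforce simp: mult.commute)
  qed
  ultimately show ?case by (intro times_differentiable_SucI)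
qed simp

lemma times_differentiable_Suc_continuous:
  "times_differentiable (Suc n) f \<Longrightarrow> continuous_on UNIV f"
  by (auto intro!: continuous_at_imp_continuous_on elim!: DERIV_isCont)

lemma times_differentiable_Suc_deriv_funpow:
  "times_differentiable (Suc n) f \<Longrightarrow> ((deriv ^^ n) f) differentiable (at x)"
proof (induction n arbitrary: f)
  case 0
  then show ?case by (auto simp: real_differentiable_def)
next
  case (Suc n)
  then obtain f' where f': "\<forall>x. (f has_real_derivative f' x) (at x)" "times_differentiable (Suc n) f'"
    by auto
  have "deriv f = f'" using f'(1) by (auto intro!: ext DERIV_imp_deriv)
  then have "(deriv ^^ Suc n) f = (deriv ^^ n) f'" by (simp only: funpow_Suc_right o_apply)
  with Suc.IH[OF f'(2)] show ?case by simp
qed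

lemma smooth_test_fun:
  assumes "smooth f" and "\<And>x. x \<notin> {a..b} \<Longrightarrow> f x = 0"
  shows "test_fun f"
  using assms unfolding test_fun_def smooth_def
  by (auto intro!: times_differentiable_Suc_deriv_funpow)

definition flat_exp :: "nat \<Rightarrow> real \<Rightarrow> real" where
  "flat_exp k x = (if x > 0 then exp (- 1 / x) / x ^ k else 0)"

lemma flat_exp_tendsto_0: "(flat_exp k \<longlongrightarrow> 0) (at_right 0)"
proof -
  have "((\<lambda>y::real. y ^ k / exp y) \<longlongrightarrow> 0) at_top"
    by (rule tendsto_power_div_exp_0)
  from filterlim_compose[OF this filterlim_inverse_at_top_right]
  have "((\<lambda>x::real. inverse x ^ k / exp (inverse x)) \<longlongrightarrow> 0) (at_right 0)" by simp
  moreover have "\<forall>\<^sub>F x in at_right 0. inverse x ^ k / exp (inverse x) = flat_exp k x"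
    by (rule eventually_mono[OF eventually_at_right_less])
       (simp add: flat_exp_def exp_minus field_simps power_inverse)
  ultimately show ?thesis by (rule Lim_transform_eventually)
qed

lemma flat_exp_has_derivative:
  "(flat_exp k has_real_derivative - real k * flat_exp (Suc k) x + flat_exp (Suc (Suc k)) x) (at x)"
proof (cases x "0::real" rule: linorder_cases)
  case less
  have "((\<lambda>x. 0) has_real_derivative 0) (at x)" by simp
  then have "(flat_exp k has_real_derivative 0) (at x)"
    by (rule has_field_derivative_transform_within_open[where S = "{..<0}"])
       (use less in \<open>auto simp: flat_exp_def\<close>)
  then show ?thesis using less by (simp add: flat_exp_def)
next
  case equal
  have "((\<lambda>y. (flat_exp k y - flat_exp k 0) / (y - 0)) \<longlongrightarrow> 0) (at 0)"
    unfolding filterlim_at_split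
  proof
    show "((\<lambda>y. (flat_exp k y - flat_exp k 0) / (y - 0)) \<longlongrightarrow> 0) (at_left 0)"
      by (rule Lim_transform_eventually[where f = "\<lambda>_. 0"])
         (auto simp: flat_exp_def eventually_at_filter)
    have "\<forall>\<^sub>F y in at_right 0. flat_exp (Suc k) y = (flat_exp k y - flat_exp k 0) / (y - 0)"
      by (rule eventually_mono[OF eventually_at_right_less]) (auto simp: flat_exp_def field_simps)
    with flat_exp_tendsto_0
    show "((\<lambda>y. (flat_exp k y - flat_exp k 0) / (y - 0)) \<longlongrightarrow> 0) (at_right 0)"
      by (rule Lim_transform_eventually)
  qed
  then show ?thesis using equal by (simp add: has_field_derivative_iff flat_exp_def)
next
  case greater
  have "((\<lambda>x. exp (- 1 / x) / x ^ k) has_real_derivative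
          - real k * flat_exp (Suc k) x + flat_exp (Suc (Suc k)) x) (at x)"
    using greater
    by (auto intro!: derivative_eq_intros simp: flat_exp_def; cases k)
       (auto simp: field_simps power2_eq_square)
  then show ?thesis
    by (rule has_field_derivative_transform_within_open[where S = "{0<..}"])
       (use greater in \<open>auto simp: flat_exp_def\<close>)
qed

lemma times_differentiable_flat_exp: "times_differentiable n (flat_exp k)"
proof (induction n arbitrary: k)
  case (Suc n)
  have "times_differentiable n (\<lambda>x. - real k * flat_exp (Suc k) x + flat_exp (Suc (Suc k)) x)"
    using Suc.IH by (intro times_differentiable_add times_differentiable_mult times_differentiable_const)
  then show ?case using flat_exp_has_derivative by (intro times_differentiable_SucI)
qed simp

definition bump :: "real \<Rightarrow> real" where
  "bump x = flat_exp 0 (1 + x) * flat_exp 0 (1 - x)"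

lemma smooth_bump: "smooth bump"
  unfolding smooth_def
proof
  fix n
  have "times_differentiable n (\<lambda>x. flat_exp 0 (1 * x + 1))"
       "times_differentiable n (\<lambda>x. flat_exp 0 ((- 1) * x + 1))"
    by (rule times_differentiable_affine[OF times_differentiable_flat_exp])+
  then show "times_differentiable n bump"
    unfolding bump_def by (auto dest: times_differentiable_mult simp: add.commute)
qed

lemma continuous_on_bump: "continuous_on UNIV bump"
  using smooth_bump times_differentiable_Suc_continuous unfolding smooth_def by blast

lemma bump_eq_0: "x \<notin> {-1<..<1} \<Longrightarrow> bump x = 0"
  by (auto simp: bump_def flat_exp_def)

lemma bump_nonneg: "bump x \<ge> 0"
  by (auto simp: bump_def flat_exp_def)

lemma bump_0_pos: "bump 0 > 0"
  by (auto simp: bump_def flat_exp_def)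

lemma continuous_has_antiderivative:
  fixes f :: "real \<Rightarrow> real"
  assumes "continuous_on UNIV f"
  obtains F where "\<And>x. (F has_real_derivative f x) (at x)"
proof -
  have "\<exists>F. \<forall>x :: real. -\<infinity> < x \<longrightarrow> x < \<infinity> \<longrightarrow> (F has_vector_derivative f x) (at x)"
    by (rule einterval_antiderivative) (use assms in \<open>auto simp: continuous_on_eq_continuous_at\<close>)
  with that show ?thesis by (auto simp: has_real_derivative_iff_has_vector_derivative)
qed

lemma has_integral_antiderivative:
  assumes "\<And>x. (F has_real_derivative f x) (at x)" and "a \<le> b"
  shows "(f has_integral (F b - F a)) {a..b}"
  by (rule fundamental_theorem_of_calculus)
     (use assms in \<open>auto simp: has_real_derivative_iff_has_vector_derivative
                        intro: has_vector_derivative_at_within\<close>)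

lemma has_real_derivative_nonneg_imp_le:
  fixes F :: "real \<Rightarrow> real"
  assumes "\<And>x. (F has_real_derivative f x) (at x)" and "\<And>x. x \<in> {a..b} \<Longrightarrow> f x \<ge> 0" and "a \<le> b"
  shows "F a \<le> F b"
  by (rule DERIV_nonneg_imp_nondecreasing[OF assms(3)]) (use assms(1,2) in auto)

lemma has_real_derivative_nonpos_imp_ge:
  fixes F :: "real \<Rightarrow> real"
  assumes "\<And>x. (F has_real_derivative f x) (at x)" and "\<And>x. x \<in> {a..b} \<Longrightarrow> f x \<le> 0" and "a \<le> b"
  shows "F b \<le> F a"
  by (rule DERIV_nonpos_imp_nonincreasing[OF assms(3)]) (use assms(1,2) in auto)

lemma has_real_derivative_zero_imp_eq:
  fixes F :: "real \<Rightarrow> real"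
  assumes "\<And>x. (F has_real_derivative f x) (at x)" and "\<And>x. x \<in> {a..b} \<Longrightarrow> f x = 0" and "a \<le> b"
  shows "F b = F a"
  using has_real_derivative_nonneg_imp_le[OF assms(1)] has_real_derivative_nonpos_imp_ge[OF assms(1)]
    assms(2,3) by (metis order.refl order.antisym)

lemma deriv_eq_0_outside:
  fixes f :: "real \<Rightarrow> real"
  assumes "\<And>t. t \<notin> {a..b} \<Longrightarrow> f t = 0" and "t \<notin> {a..b}"
  shows "deriv f t = 0"
proof -
  have "(f has_real_derivative 0) (at t)"
    by (rule has_field_derivative_transform_within_open[of "\<lambda>_. 0" 0 t "{..<a} \<union> {b<..}"])
       (use assms in auto)
  then show ?thesis by (rule DERIV_imp_deriv)
qed

lemma
  fixes f :: "real \<Rightarrow> real"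
  assumes f: "continuous_on UNIV f" and zero: "\<And>t. t \<notin> {a..b} \<Longrightarrow> f t = 0"
  shows integrable_lborel_vanishing_outside: "integrable lborel f"
    and lborel_integral_vanishing_outside: "(\<integral>t. f t \<partial>lborel) = integral {a..b} f"
proof -
  have restrict: "(\<lambda>x. if x \<in> {a..b} then f x else 0) = f"
    using zero by auto
  have "integrable lborel (\<lambda>x. indicator {a..b} x *\<^sub>R f x)"
    by (rule borel_integrable_compact) (use f in \<open>auto intro: continuous_on_subset\<close>)
  moreover have "(\<lambda>x. indicator {a..b} x *\<^sub>R f x) = f"
    using zero by (force simp: indicator_def)
  ultimately show int: "integrable lborel f" by simp
  have "((\<lambda>x. if x \<in> {a..b} then f x else 0) has_integral (\<integral>t. f t \<partial>lborel)) UNIV"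
    unfolding restrict by (rule has_integral_integral_lborel[OF int])
  then have "(f has_integral (\<integral>t. f t \<partial>lborel)) {a..b}"
    by (simp only: has_integral_restrict_UNIV)
  then show "(\<integral>t. f t \<partial>lborel) = integral {a..b} f" by (simp add: integral_unique)
qed

lemma test_fun_deriv: "test_fun \<psi> \<Longrightarrow> test_fun (deriv \<psi>)"
  unfolding test_fun_def
proof (elim conjE exE, intro conjI allI exI)
  fix k x a b assume "\<forall>k x. (deriv ^^ k) \<psi> differentiable at x"
    and zero: "\<forall>x. x \<notin> {a..b} \<longrightarrow> \<psi> x = 0"
  then show "(deriv ^^ k) (deriv \<psi>) differentiable at x"
    by (metis funpow_Suc_right o_apply)
  show "x \<notin> {a..b} \<longrightarrow> deriv \<psi> x = 0" for x
    using deriv_eq_0_outside[of a b \<psi> x] zero by blast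
qed

lemma test_fun_has_derivative:
  "test_fun \<psi> \<Longrightarrow> (\<psi> has_real_derivative deriv \<psi> t) (at t)"
  unfolding test_fun_def by (metis DERIV_deriv_iff_real_differentiable funpow_0)

lemma test_fun_continuous: "test_fun \<psi> \<Longrightarrow> continuous_on UNIV \<psi>"
  by (meson test_fun_has_derivative DERIV_isCont continuous_at_imp_continuous_on)

lemma test_fun_integrable_mult:
  assumes "continuous_on UNIV f" and "test_fun \<psi>"
  shows "integrable lborel (\<lambda>t. f t * \<psi> t)"
proof -
  obtain a b where "\<And>t. t \<notin> {a..b} \<Longrightarrow> \<psi> t = 0"
    using assms(2) unfolding test_fun_def by blast
  then show ?thesis
    using assms test_fun_continuous
    by (intro integrable_lborel_vanishing_outside[of _ a b] continuous_intros) auto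
qed

lemma test_fun_integral_by_parts:
  fixes K k :: "real \<Rightarrow> real"
  assumes K: "\<And>t. (K has_real_derivative k t) (at t)" and k: "continuous_on UNIV k"
    and \<psi>: "test_fun \<psi>"
  shows "(\<integral>t. k t * \<psi> t \<partial>lborel) = - (\<integral>t. K t * deriv \<psi> t \<partial>lborel)"
proof -
  obtain a b where zero: "\<And>t. t \<notin> {a..b} \<Longrightarrow> \<psi> t = 0"
    using \<psi> unfolding test_fun_def by blast
  define A B where "A = a - 1" and "B = max a b + 1"
  have AB: "A \<le> B" "A \<notin> {a..b}" "B \<notin> {a..b}" and out: "\<And>t. t \<notin> {A..B} \<Longrightarrow> t \<notin> {a..b}"
    unfolding A_def B_def by auto
  have zero': "\<And>t. t \<notin> {a..b} \<Longrightarrow> deriv \<psi> t = 0"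
    using deriv_eq_0_outside zero by blast
  have cK: "continuous_on UNIV K"
    using K by (meson DERIV_isCont continuous_at_imp_continuous_on)
  have c\<psi>: "continuous_on UNIV \<psi>" "continuous_on UNIV (deriv \<psi>)"
    using \<psi> test_fun_deriv test_fun_continuous by blast+
  have "((\<lambda>t. k t * \<psi> t + K t * deriv \<psi> t) has_integral (K B * \<psi> B - K A * \<psi> A)) {A..B}"
    by (rule has_integral_antiderivative[OF _ AB(1)])
       (use K test_fun_has_derivative[OF \<psi>] in \<open>auto intro!: derivative_eq_intros\<close>)
  then have "integral {A..B} (\<lambda>t. k t * \<psi> t + K t * deriv \<psi> t) = 0"
    using zero AB by (simp add: integral_unique)
  moreover have "integral {A..B} (\<lambda>t. k t * \<psi> t + K t * deriv \<psi> t)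
      = integral {A..B} (\<lambda>t. k t * \<psi> t) + integral {A..B} (\<lambda>t. K t * deriv \<psi> t)"
    using k cK c\<psi>
    by (intro integral_add integrable_continuous_interval continuous_intros;
        auto intro: continuous_on_subset)
  moreover have "(\<integral>t. k t * \<psi> t \<partial>lborel) = integral {A..B} (\<lambda>t. k t * \<psi> t)"
    using k c\<psi> zero out by (intro lborel_integral_vanishing_outside continuous_intros) auto
  moreover have "(\<integral>t. K t * deriv \<psi> t \<partial>lborel) = integral {A..B} (\<lambda>t. K t * deriv \<psi> t)"
    using cK c\<psi> zero' out by (intro lborel_integral_vanishing_outside continuous_intros) auto
  ultimately show ?thesis by simp
qed

section \<open>Functions with vanishing weak second derivative are affine\<close>

lemma vanishing_second_differences_max_principle:
  fixes E :: "real \<Rightarrow> real"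
  assumes cont: "continuous_on UNIV E"
    and sd: "\<And>a h. h > 0 \<Longrightarrow> E a - 2 * E (a + h) + E (a + 2 * h) = 0"
    and "p < q" "E p = 0" "E q = 0" and x: "x \<in> {p..q}"
  shows "E x \<le> 0"
proof (rule ccontr)
  assume "\<not> E x \<le> 0"
  have cE: "continuous_on {p..q} E" using cont continuous_on_subset by blast
  obtain xm where xm: "xm \<in> {p..q}" "\<And>y. y \<in> {p..q} \<Longrightarrow> E y \<le> E xm"
    using continuous_attains_sup[OF compact_Icc _ cE] \<open>p < q\<close> by fastforce
  define S where "S = {x \<in> {p..q}. E x = E xm}"
  have "compact S"
    unfolding S_def using continuous_closed_preimage_constant[OF cE closed_atLeastAtMost]
    by (auto simp: compact_eq_bounded_closed intro: bounded_subset[of "{p..q}"])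
  moreover have "S \<noteq> {}" using xm S_def by auto
  ultimately obtain z where z: "z \<in> S" "\<And>y. y \<in> S \<Longrightarrow> y \<le> z"
    using continuous_attains_sup[of S "\<lambda>x. x"] by (auto intro: continuous_intros)
  have "E z > 0" using z xm x \<open>\<not> E x \<le> 0\<close> S_def by force
  with z(1) \<open>E p = 0\<close> \<open>E q = 0\<close> have "p < z" "z < q"
    unfolding S_def by (auto simp: order.order_iff_strict)
  define h where "h = min (z - p) (q - z)"
  have h: "h > 0" "z - h \<in> {p..q}" "z + h \<in> {p..q}"
    using \<open>p < z\<close> \<open>z < q\<close> by (auto simp: h_def)
  have "E (z - h) + E (z + h) = 2 * E z"
    using sd[OF h(1), of "z - h"] by (simp add: algebra_simps)
  moreover have "E (z - h) \<le> E z" "E (z + h) \<le> E z"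
    using xm h z S_def by auto
  ultimately have "z + h \<in> S" using h z S_def by auto
  then show False using z h by fastforce
qed

lemma vanishing_second_differences_affine:
  fixes F :: "real \<Rightarrow> real"
  assumes cont: "continuous_on UNIV F"
    and sd: "\<And>a h. h > 0 \<Longrightarrow> F a - 2 * F (a + h) + F (a + 2 * h) = 0"
  shows "\<exists>\<alpha> \<beta>. \<forall>t. F t = \<alpha> * t + \<beta>"
proof -
  have chord: "F x = F p + (F q - F p) * (x - p) / (q - p)" if "p < q" "x \<in> {p..q}" for p q x
  proof -
    define k where "k = (F q - F p) / (q - p)"
    define E where "E y = F y - (F p + k * (y - p))" for y
    have "continuous_on UNIV E" "continuous_on UNIV (\<lambda>y. - E y)"
      unfolding E_def using cont by (auto intro!: continuous_intros)
    moreover have "E a - 2 * E (a + h) + E (a + 2 * h) = 0" if "h > 0" for a h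
      using sd[OF that, of a] unfolding E_def by (simp add: algebra_simps)
    moreover have "E p = 0" "E q = 0"
      using \<open>p < q\<close> unfolding E_def k_def by simp_all
    ultimately have "E x \<le> 0" "- E x \<le> 0"
      using vanishing_second_differences_max_principle[of E p q x]
        vanishing_second_differences_max_principle[of "\<lambda>y. - E y" p q x] that
      by (auto simp: algebra_simps)
    then show ?thesis unfolding E_def k_def by simp
  qed
  show ?thesis
  proof (intro exI allI)
    fix t
    define L :: real where "L = \<bar>t\<bar> + 1"
    have "L > 0" and L: "-L < L" "t \<in> {-L..L}" "1 \<in> {-L..L}" "-1 \<in> {-L..L}"
      unfolding L_def by auto
    have e1: "F 1 = F (-L) + (F L - F (-L)) * (1 + L) / (2 * L)"
      and e2: "F (-1) = F (-L) + (F L - F (-L)) * (-1 + L) / (2 * L)"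
      and e3: "F t = F (-L) + (F L - F (-L)) * (t + L) / (2 * L)"
      using chord[OF L(1) L(3)] chord[OF L(1) L(4)] chord[OF L(1) L(2)] by simp_all
    show "F t = (F 1 - F (-1)) / 2 * t + (F 1 + F (-1)) / 2"
      unfolding e1 e2 e3 using \<open>L > 0\<close> by (simp add: field_simps)
  qed
qed

definition bump_mass :: real where
  "bump_mass = integral {-1..1} bump"

lemma bump_primitive:
  obtains R where "\<And>x. (R has_real_derivative bump x) (at x)"
    and "\<And>x. x \<le> -1 \<Longrightarrow> R x = 0" and "\<And>x. x \<ge> 1 \<Longrightarrow> R x = bump_mass"
proof -
  obtain R0 where R0: "\<And>x. (R0 has_real_derivative bump x) (at x)"
    using continuous_has_antiderivative[OF continuous_on_bump] by blast
  define R where "R x = R0 x - R0 (-1)" for x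
  have R: "\<And>x. (R has_real_derivative bump x) (at x)"
    unfolding R_def using R0 by (auto intro!: derivative_eq_intros)
  have left: "R x = 0" if "x \<le> -1" for x
  proof -
    have "R (-1) = R x"
      by (rule has_real_derivative_zero_imp_eq[OF R _ that]) (auto intro: bump_eq_0)
    then show ?thesis by (simp add: R_def)
  qed
  have mass: "bump_mass = R 1"
    using has_integral_antiderivative[OF R, of "-1" 1] left[of "-1"]
    by (simp add: bump_mass_def integral_unique)
  have "R x = bump_mass" if "x \<ge> 1" for x
    unfolding mass by (rule has_real_derivative_zero_imp_eq[OF R _ that]) (auto intro: bump_eq_0)
  with R left show thesis by (rule that)
qed

lemma bump_mass_pos: "bump_mass > 0"
proof -
  obtain R where R: "\<And>x. (R has_real_derivative bump x) (at x)"
    and left: "\<And>x. x \<le> -1 \<Longrightarrow> R x = 0" and right: "\<And>x. x \<ge> 1 \<Longrightarrow> R x = bump_mass"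
    using bump_primitive by blast
  have "isCont bump 0" using continuous_on_bump by (simp add: continuous_on_eq_continuous_at)
  then obtain \<delta> where "\<delta> > 0" and \<delta>: "\<And>y. dist y 0 < \<delta> \<Longrightarrow> dist (bump y) (bump 0) < bump 0 / 2"
    using bump_0_pos unfolding continuous_at_eps_delta by (metis half_gt_zero)
  define e where "e = min (\<delta> / 2) (1 / 2)"
  have e: "e > 0" "e < \<delta>" "e \<le> 1 / 2" using \<open>\<delta> > 0\<close> by (auto simp: e_def)
  have "((\<lambda>y. R y - bump 0 / 2 * y) has_real_derivative bump y - bump 0 / 2) (at y)" for y
    using R by (auto intro!: derivative_eq_intros)
  moreover have "bump y \<ge> bump 0 / 2" if "y \<in> {-e..e}" for y
  proof -
    have "\<bar>y\<bar> < \<delta>" using that e by auto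
    then have "\<bar>bump y - bump 0\<bar> < bump 0 / 2" using \<delta>[of y] by (simp add: dist_real_def)
    then show ?thesis by linarith
  qed
  ultimately have "R (-e) - bump 0 / 2 * (-e) \<le> R e - bump 0 / 2 * e"
    using has_real_derivative_nonneg_imp_le[of "\<lambda>y. R y - bump 0 / 2 * y" "\<lambda>y. bump y - bump 0 / 2" "-e" e] e
    by simp
  moreover have "R (-1) \<le> R (-e)" "R e \<le> R 1"
    using e by (intro has_real_derivative_nonneg_imp_le[OF R] bump_nonneg; simp)+
  moreover have "bump 0 / 2 * e > 0" using bump_0_pos e by simp
  ultimately show ?thesis using left[of "-1"] right[of 1] by linarith
qed

lemma bump_second_primitive:
  obtains R R2 where "\<And>x. (R has_real_derivative bump x) (at x)"
    and "\<And>x. (R2 has_real_derivative R x) (at x)"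
    and "\<And>x. x \<le> -1 \<Longrightarrow> R2 x = 0" and "\<And>x. x \<ge> 1 \<Longrightarrow> R2 x = R2 1 + bump_mass * (x - 1)"
    and "smooth R2"
proof -
  obtain R where R: "\<And>x. (R has_real_derivative bump x) (at x)"
    and left: "\<And>x. x \<le> -1 \<Longrightarrow> R x = 0" and right: "\<And>x. x \<ge> 1 \<Longrightarrow> R x = bump_mass"
    using bump_primitive by blast
  have "continuous_on UNIV R"
    using R by (auto intro!: continuous_at_imp_continuous_on DERIV_isCont)
  then obtain R20 where R20: "\<And>x. (R20 has_real_derivative R x) (at x)"
    using continuous_has_antiderivative by blast
  define R2 where "R2 x = R20 x - R20 (-1)" for x
  have R2: "\<And>x. (R2 has_real_derivative R x) (at x)"
    unfolding R2_def using R20 by (auto intro!: derivative_eq_intros)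
  have "R2 x = 0" if "x \<le> -1" for x
  proof -
    have "R2 (-1) = R2 x"
      by (rule has_real_derivative_zero_imp_eq[OF R2 _ that]) (auto intro: left)
    then show ?thesis by (simp add: R2_def)
  qed
  moreover have "R2 x = R2 1 + bump_mass * (x - 1)" if "x \<ge> 1" for x
  proof -
    have "((\<lambda>y. R2 y - bump_mass * y) has_real_derivative R y - bump_mass) (at y)" for y
      using R2 by (auto intro!: derivative_eq_intros)
    then have "R2 x - bump_mass * x = R2 1 - bump_mass * 1"
      by (rule has_real_derivative_zero_imp_eq) (use that right in auto)
    then show ?thesis by (simp add: algebra_simps)
  qed
  moreover have "smooth R2"
    using smooth_bump R R2 times_differentiable_SucD unfolding smooth_def
    by (metis times_differentiable_SucI)
  ultimately show thesis using that R R2 by blast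
qed

definition mollifier :: "real \<Rightarrow> real \<Rightarrow> real \<Rightarrow> real" where
  "mollifier e x t = bump ((t - x) / e) / e"

lemma rescaled_has_real_derivative:
  assumes "\<And>y. (G has_real_derivative g y) (at y)" and "e \<noteq> 0"
  shows "((\<lambda>t. G ((t - x) / e)) has_real_derivative g ((t - x) / e) / e) (at t)"
proof -
  have "((\<lambda>t. (t - x) / e) has_real_derivative 1 / e) (at t)"
    using assms(2) by (auto intro!: derivative_eq_intros)
  from DERIV_chain2[OF assms(1) this] show ?thesis by simp
qed

lemma continuous_on_mollifier: "e > 0 \<Longrightarrow> continuous_on UNIV (mollifier e x)"
  unfolding mollifier_def
  by (intro continuous_intros continuous_on_compose2[OF continuous_on_bump]) auto

lemma mollifier_eq_0: "e > 0 \<Longrightarrow> t \<notin> {x - e..x + e} \<Longrightarrow> mollifier e x t = 0"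
  unfolding mollifier_def
  by (rule divide_eq_0_iff[THEN iffD2], rule disjI1, rule bump_eq_0)
     (auto simp: pos_divide_less_eq pos_less_divide_eq)

lemma mollifier_has_integral:
  assumes "e > 0"
  shows "(mollifier e x has_integral bump_mass) {x - e..x + e}"
proof -
  obtain R where R: "\<And>x. (R has_real_derivative bump x) (at x)"
    and left: "\<And>x. x \<le> -1 \<Longrightarrow> R x = 0" and right: "\<And>x. x \<ge> 1 \<Longrightarrow> R x = bump_mass"
    using bump_primitive by blast
  have "((\<lambda>t. R ((t - x) / e)) has_real_derivative mollifier e x t) (at t)" for t
    unfolding mollifier_def using assms by (intro rescaled_has_real_derivative R) auto
  from has_integral_antiderivative[OF this, of "x - e" "x + e"]
  show ?thesis using assms left[of "-1"] right[of 1] by simp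
qed

lemma mollifier_integral_approx:
  fixes F :: "real \<Rightarrow> real"
  assumes F: "continuous_on UNIV F" and e: "e > 0"
    and close: "\<And>t. t \<in> {x - e..x + e} \<Longrightarrow> \<bar>F t - F x\<bar> \<le> \<eta>"
  shows "\<bar>(\<integral>t. F t * mollifier e x t \<partial>lborel) - bump_mass * F x\<bar> \<le> bump_mass * \<eta>"
proof -
  let ?I = "{x - e..x + e}"
  have m: "(mollifier e x has_integral bump_mass) ?I"
    using mollifier_has_integral[OF e] .
  have "(\<integral>t. F t * mollifier e x t \<partial>lborel) = integral ?I (\<lambda>t. F t * mollifier e x t)"
    using F continuous_on_mollifier[OF e] mollifier_eq_0[OF e]
    by (intro lborel_integral_vanishing_outside continuous_intros) auto
  moreover have "((\<lambda>t. F t * mollifier e x t) has_integral integral ?I (\<lambda>t. F t * mollifier e x t)) ?I"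
    using F continuous_on_mollifier[OF e]
    by (intro integrable_integral integrable_continuous_interval continuous_intros;
        auto intro: continuous_on_subset)
  then have diff: "((\<lambda>t. (F t - F x) * mollifier e x t) has_integral
      integral ?I (\<lambda>t. F t * mollifier e x t) - bump_mass * F x) ?I"
    using has_integral_diff[OF _ has_integral_mult_right[OF m, of "F x"]]
    by (simp add: algebra_simps)
  have m\<eta>: "((\<lambda>t. \<eta> * mollifier e x t) has_integral \<eta> * bump_mass) ?I"
    by (rule has_integral_mult_right[OF m])
  have "norm (integral ?I (\<lambda>t. (F t - F x) * mollifier e x t))
      \<le> integral ?I (\<lambda>t. \<eta> * mollifier e x t)"
  proof (rule integral_norm_bound_integral)
    show "(\<lambda>t. (F t - F x) * mollifier e x t) integrable_on ?I"
      using diff by blast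
    show "(\<lambda>t. \<eta> * mollifier e x t) integrable_on ?I"
      using m\<eta> by blast
    fix t assume "t \<in> ?I"
    moreover have "mollifier e x t \<ge> 0"
      unfolding mollifier_def using bump_nonneg e by simp
    ultimately show "norm ((F t - F x) * mollifier e x t) \<le> \<eta> * mollifier e x t"
      using close by (simp add: abs_mult mult_right_mono)
  qed
  ultimately show ?thesis
    using integral_unique[OF diff] integral_unique[OF m] by (simp add: mult.commute)
qed

lemma second_difference_of_mollifiers_test_fun:
  assumes e: "e > 0" and h: "h > 0"
  obtains \<Psi> where "test_fun \<Psi>"
    and "\<And>t. deriv (deriv \<Psi>) t = mollifier e a t - 2 * mollifier e (a + h) t + mollifier e (a + 2 * h) t"
proof -
  obtain R R2 where R: "\<And>x. (R has_real_derivative bump x) (at x)"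
    and R2: "\<And>x. (R2 has_real_derivative R x) (at x)"
    and left: "\<And>x. x \<le> -1 \<Longrightarrow> R2 x = 0"
    and right: "\<And>x. x \<ge> 1 \<Longrightarrow> R2 x = R2 1 + bump_mass * (x - 1)"
    and "smooth R2"
    using bump_second_primitive by blast
  define P where "P x t = e * R2 ((t - x) / e)" for x t
  define \<Psi> where "\<Psi> t = P a t - 2 * P (a + h) t + P (a + 2 * h) t" for t
  have P': "(P x has_real_derivative R ((t - x) / e)) (at t)" for x t
    using DERIV_cmult[OF rescaled_has_real_derivative[OF R2, of e x t], of e] e
    unfolding P_def[abs_def] by simp
  have R': "((\<lambda>t. R ((t - x) / e)) has_real_derivative mollifier e x t) (at t)" for x t
    unfolding mollifier_def using e by (intro rescaled_has_real_derivative R) auto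
  have "deriv \<Psi> = (\<lambda>t. R ((t - a) / e) - 2 * R ((t - (a + h)) / e) + R ((t - (a + 2 * h)) / e))"
    unfolding \<Psi>_def[abs_def] by (intro ext DERIV_imp_deriv DERIV_add DERIV_diff DERIV_cmult P')
  then have \<Psi>'': "deriv (deriv \<Psi>) t
      = mollifier e a t - 2 * mollifier e (a + h) t + mollifier e (a + 2 * h) t" for t
    by (simp, intro DERIV_imp_deriv DERIV_add DERIV_diff DERIV_cmult R')
  have "test_fun \<Psi>"
  proof (rule smooth_test_fun)
    have "times_differentiable n (\<lambda>t. R2 (1 / e * t + - x / e))" for n x
      using \<open>smooth R2\<close> unfolding smooth_def by (intro times_differentiable_affine) blast
    then have "times_differentiable n (P x)" for n x
      unfolding P_def by (intro times_differentiable_mult times_differentiable_const)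
        (simp add: diff_divide_distrib)
    then show "smooth \<Psi>"
      unfolding smooth_def \<Psi>_def
      by (intro allI times_differentiable_add times_differentiable_diff times_differentiable_mult
            times_differentiable_const)
    show "\<Psi> t = 0" if t: "t \<notin> {a - e..a + 2 * h + e}" for t
    proof (cases "t < a - e")
      case True
      have "P x t = 0" if "x \<ge> a" for x
      proof -
        have "(t - x) / e \<le> -1" using True that e by (simp add: pos_divide_le_eq)
        then show ?thesis unfolding P_def using left by simp
      qed
      then show ?thesis using h by (simp add: \<Psi>_def)
    next
      case False
      have Pr: "P x t = e * R2 1 + bump_mass * (t - x - e)" if "x \<le> a + 2 * h" for x
      proof -
        have "(t - x) / e \<ge> 1" using False t that e by (simp add: pos_le_divide_eq)
        from right[OF this] have "P x t = e * (R2 1 + bump_mass * ((t - x) / e - 1))"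
          unfolding P_def by simp
        also have "\<dots> = e * R2 1 + bump_mass * (t - x - e)"
          using e by (simp add: field_simps)
        finally show ?thesis .
      qed
      show ?thesis
        using Pr[of a] Pr[of "a + h"] Pr[of "a + 2 * h"] h by (simp add: \<Psi>_def algebra_simps)
    qed
  qed
  with \<Psi>'' show thesis using that by blast
qed

lemma mollified_second_difference_eq_0:
  fixes F :: "real \<Rightarrow> real"
  assumes F: "continuous_on UNIV F"
    and weak: "\<And>\<psi>. test_fun \<psi> \<Longrightarrow> (\<integral>t. F t * deriv (deriv \<psi>) t \<partial>lborel) = 0"
    and "e > 0" and "h > 0"
  defines "J x \<equiv> \<integral>t. F t * mollifier e x t \<partial>lborel"
  shows "J a - 2 * J (a + h) + J (a + 2 * h) = 0"
proof -
  obtain \<Psi> where "test_fun \<Psi>" and \<Psi>'':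
    "\<And>t. deriv (deriv \<Psi>) t = mollifier e a t - 2 * mollifier e (a + h) t + mollifier e (a + 2 * h) t"
    using second_difference_of_mollifiers_test_fun[OF \<open>e > 0\<close> \<open>h > 0\<close>] by blast
  have int: "integrable lborel (\<lambda>t. F t * mollifier e x t)" for x
    using F continuous_on_mollifier[OF \<open>e > 0\<close>] mollifier_eq_0[OF \<open>e > 0\<close>]
    by (intro integrable_lborel_vanishing_outside[of _ "x - e" "x + e"] continuous_intros) auto
  have "0 = (\<integral>t. F t * deriv (deriv \<Psi>) t \<partial>lborel)"
    using weak[OF \<open>test_fun \<Psi>\<close>] by simp
  also have "\<dots> = (\<integral>t. F t * mollifier e a t - 2 * (F t * mollifier e (a + h) t)
      + F t * mollifier e (a + 2 * h) t \<partial>lborel)"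
    by (simp add: \<Psi>'' algebra_simps)
  also have "\<dots> = J a - 2 * J (a + h) + J (a + 2 * h)"
    using int by (simp add: J_def integrable_diff integrable_add integrable_mult_right)
  finally show ?thesis ..
qed

lemma weak_second_derivative_zero_imp_affine:
  fixes F :: "real \<Rightarrow> real"
  assumes F: "continuous_on UNIV F"
    and weak: "\<And>\<psi>. test_fun \<psi> \<Longrightarrow> (\<integral>t. F t * deriv (deriv \<psi>) t \<partial>lborel) = 0"
  shows "\<exists>\<alpha> \<beta>. \<forall>t. F t = \<alpha> * t + \<beta>"
proof (rule vanishing_second_differences_affine[OF F])
  fix a h :: real assume h: "h > 0"
  define S where "S = F a - 2 * F (a + h) + F (a + 2 * h)"
  define K where "K = {a - 1..a + 2 * h + 1}"
  have bound: "\<bar>S\<bar> \<le> 4 * \<eta>" if "\<eta> > 0" for \<eta>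
  proof -
    have "uniformly_continuous_on K F"
      unfolding K_def using F by (intro compact_uniformly_continuous) (auto intro: continuous_on_subset)
    then obtain \<delta> where "\<delta> > 0" and \<delta>: "\<And>x t. x \<in> K \<Longrightarrow> t \<in> K \<Longrightarrow> \<bar>t - x\<bar> < \<delta> \<Longrightarrow> \<bar>F t - F x\<bar> < \<eta>"
      unfolding uniformly_continuous_on_def dist_real_def using \<open>\<eta> > 0\<close>
      by metis
    define e where "e = min (\<delta> / 2) 1"
    have e: "e > 0" "e < \<delta>" "e \<le> 1" using \<open>\<delta> > 0\<close> by (auto simp: e_def)
    let ?J = "\<lambda>x. \<integral>t. F t * mollifier e x t \<partial>lborel"
    have approx: "\<bar>?J x - bump_mass * F x\<bar> \<le> bump_mass * \<eta>" if "x \<in> {a, a + h, a + 2 * h}" for x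
    proof (rule mollifier_integral_approx[OF F e(1)])
      fix t assume "t \<in> {x - e..x + e}"
      then have "x \<in> K" "t \<in> K" "\<bar>t - x\<bar> < \<delta>" using that h e by (auto simp: K_def)
      then show "\<bar>F t - F x\<bar> \<le> \<eta>" using \<delta> by fastforce
    qed
    have "?J a - 2 * ?J (a + h) + ?J (a + 2 * h) = 0"
      using mollified_second_difference_eq_0[OF F weak e(1) h] .
    then have "bump_mass * S = - ((?J a - bump_mass * F a) - 2 * (?J (a + h) - bump_mass * F (a + h))
        + (?J (a + 2 * h) - bump_mass * F (a + 2 * h)))"
      by (simp add: S_def algebra_simps)
    then have "\<bar>bump_mass * S\<bar> \<le> 4 * bump_mass * \<eta>"
      using approx[of a] approx[of "a + h"] approx[of "a + 2 * h"] by (simp add: abs_le_iff)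
    then show ?thesis using bump_mass_pos by (simp add: abs_mult)
  qed
  have "\<bar>S\<bar> \<le> 0"
    by (rule field_le_epsilon) (use bound[of "_ / 4"] in simp)
  then show "F a - 2 * F (a + h) + F (a + 2 * h) = 0" by (simp add: S_def)
qed

section \<open>Regularity of distributional wave profiles\<close>

lemma wave_eq_distr_integrated_twice:
  fixes \<phi> P G G2 :: "real \<Rightarrow> real"
  assumes weq: "wave_eq_distr m D b d c r \<phi>"
    and \<phi>: "continuous_on UNIV \<phi>" and cu: "continuous_on UNIV (\<lambda>t. \<phi> t powr m)"
    and cg: "continuous_on UNIV (\<lambda>t. b (\<phi> (t - c * r)) - d (\<phi> t))"
    and P: "\<And>t. (P has_real_derivative \<phi> t) (at t)"
    and G: "\<And>t. (G has_real_derivative b (\<phi> (t - c * r)) - d (\<phi> t)) (at t)"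
    and G2: "\<And>t. (G2 has_real_derivative G t) (at t)"
    and \<psi>: "test_fun \<psi>"
  shows "(\<integral>t. (c * P t - D * \<phi> t powr m - G2 t) * deriv (deriv \<psi>) t \<partial>lborel) = 0"
proof -
  let ?u = "\<lambda>t. \<phi> t powr m" and ?g = "\<lambda>t. b (\<phi> (t - c * r)) - d (\<phi> t)"
  let ?\<psi>' = "deriv \<psi>" and ?\<psi>'' = "deriv (deriv \<psi>)"
  have \<psi>': "test_fun ?\<psi>'" and \<psi>'': "test_fun ?\<psi>''" using \<psi> test_fun_deriv by blast+
  have cG: "continuous_on UNIV G" and cP: "continuous_on UNIV P" and cG2: "continuous_on UNIV G2"
    using G P G2 by (meson DERIV_isCont continuous_at_imp_continuous_on)+
  have parts:
    "(\<integral>t. \<phi> t * ?\<psi>' t \<partial>lborel) = - (\<integral>t. P t * ?\<psi>'' t \<partial>lborel)"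
    "(\<integral>t. ?g t * \<psi> t \<partial>lborel) = - (\<integral>t. G t * ?\<psi>' t \<partial>lborel)"
    "(\<integral>t. G t * ?\<psi>' t \<partial>lborel) = - (\<integral>t. G2 t * ?\<psi>'' t \<partial>lborel)"
    using test_fun_integral_by_parts[OF P \<phi> \<psi>'] test_fun_integral_by_parts[OF G cg \<psi>]
      test_fun_integral_by_parts[OF G2 cG \<psi>'] by simp_all
  have int: "integrable lborel (\<lambda>t. ?u t * ?\<psi>'' t)" "integrable lborel (\<lambda>t. ?g t * \<psi> t)"
    "integrable lborel (\<lambda>t. P t * ?\<psi>'' t)" "integrable lborel (\<lambda>t. G2 t * ?\<psi>'' t)"
    using cu cg cP cG2 \<psi> \<psi>'' by (auto intro: test_fun_integrable_mult)
  have "- c * (\<integral>t. \<phi> t * ?\<psi>' t \<partial>lborel) = (\<integral>t. - c * \<phi> t * ?\<psi>' t \<partial>lborel)"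
    by (simp add: mult.assoc)
  also have "\<dots> = (\<integral>t. D * (\<phi> t powr m) * ?\<psi>'' t - d (\<phi> t) * \<psi> t
      + b (\<phi> (t - c * r)) * \<psi> t \<partial>lborel)"
    using weq \<psi> unfolding wave_eq_distr_def by blast
  also have "\<dots> = (\<integral>t. D * (?u t * ?\<psi>'' t) + ?g t * \<psi> t \<partial>lborel)"
    by (simp add: algebra_simps)
  also have "\<dots> = D * (\<integral>t. ?u t * ?\<psi>'' t \<partial>lborel) + (\<integral>t. ?g t * \<psi> t \<partial>lborel)"
    using int by simp
  finally have "c * (\<integral>t. P t * ?\<psi>'' t \<partial>lborel)
      = D * (\<integral>t. ?u t * ?\<psi>'' t \<partial>lborel) + (\<integral>t. G2 t * ?\<psi>'' t \<partial>lborel)"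
    unfolding parts by simp
  moreover have "(\<lambda>t. (c * P t - D * ?u t - G2 t) * ?\<psi>'' t)
      = (\<lambda>t. c * (P t * ?\<psi>'' t) - D * (?u t * ?\<psi>'' t) - G2 t * ?\<psi>'' t)"
    by (simp add: algebra_simps)
  ultimately show ?thesis using int by simp
qed

lemma wave_eq_distr_regularity:
  fixes \<phi> b d :: "real \<Rightarrow> real"
  assumes b: "continuous_on {0..} b" and d: "continuous_on {0..} d"
    and \<phi>: "continuous_on UNIV \<phi>" and \<phi>_nonneg: "\<And>t. \<phi> t \<ge> 0"
    and "m > 0" and "D > 0" and weq: "wave_eq_distr m D b d c r \<phi>"
  obtains Bf Df \<alpha> where "\<And>t. (Bf has_real_derivative b (\<phi> t)) (at t)"
    and "\<And>t. (Df has_real_derivative d (\<phi> t)) (at t)"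
    and "\<And>t. ((\<lambda>t. \<phi> t powr m) has_real_derivative (c * \<phi> t - (Bf (t - c * r) - Df t) - \<alpha>) / D) (at t)"
proof -
  have "range \<phi> \<subseteq> {0..}" using \<phi>_nonneg by auto
  then have b\<phi>: "continuous_on UNIV (\<lambda>t. b (\<phi> t))" and d\<phi>: "continuous_on UNIV (\<lambda>t. d (\<phi> t))"
    using continuous_on_compose2[OF b \<phi>] continuous_on_compose2[OF d \<phi>] by auto
  obtain Bf where Bf: "\<And>t. (Bf has_real_derivative b (\<phi> t)) (at t)"
    using continuous_has_antiderivative[OF b\<phi>] by blast
  obtain Df where Df: "\<And>t. (Df has_real_derivative d (\<phi> t)) (at t)"
    using continuous_has_antiderivative[OF d\<phi>] by blast
  obtain P where P: "\<And>t. (P has_real_derivative \<phi> t) (at t)"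
    using continuous_has_antiderivative[OF \<phi>] by blast
  define G where "G t = Bf (t - c * r) - Df t" for t
  have G: "(G has_real_derivative b (\<phi> (t - c * r)) - d (\<phi> t)) (at t)" for t
  proof -
    have "((\<lambda>t. t - c * r) has_real_derivative 1) (at t)" by (auto intro!: derivative_eq_intros)
    from DERIV_chain2[OF Bf this] show ?thesis
      unfolding G_def by (auto intro!: derivative_intros Df)
  qed
  then have "continuous_on UNIV G"
    by (meson DERIV_isCont continuous_at_imp_continuous_on)
  then obtain G2 where G2: "\<And>t. (G2 has_real_derivative G t) (at t)"
    using continuous_has_antiderivative by blast
  have cu: "continuous_on UNIV (\<lambda>t. \<phi> t powr m)"
    by (rule continuous_on_powr') (use \<phi> \<phi>_nonneg \<open>m > 0\<close> in auto)
  have cg: "continuous_on UNIV (\<lambda>t. b (\<phi> (t - c * r)) - d (\<phi> t))"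
    by (intro continuous_intros continuous_on_compose2[OF b\<phi>] d\<phi>) auto
  have "\<exists>\<alpha> \<beta>. \<forall>t. c * P t - D * \<phi> t powr m - G2 t = \<alpha> * t + \<beta>"
  proof (rule weak_second_derivative_zero_imp_affine)
    have "continuous_on UNIV P" "continuous_on UNIV G2"
      using P G2 by (meson DERIV_isCont continuous_at_imp_continuous_on)+
    then show "continuous_on UNIV (\<lambda>t. c * P t - D * \<phi> t powr m - G2 t)"
      using cu by (intro continuous_on_diff continuous_on_mult_left)
    show "(\<integral>t. (c * P t - D * \<phi> t powr m - G2 t) * deriv (deriv \<psi>) t \<partial>lborel) = 0"
      if "test_fun \<psi>" for \<psi>
      by (rule wave_eq_distr_integrated_twice[OF weq \<phi> cu cg P G G2 that])
  qed
  then obtain \<alpha> \<beta> where "\<And>t. c * P t - D * \<phi> t powr m - G2 t = \<alpha> * t + \<beta>" by blast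
  then have u_eq: "(\<lambda>t. \<phi> t powr m) = (\<lambda>t. (c * P t - G2 t - \<alpha> * t - \<beta>) / D)"
    using \<open>D > 0\<close> by (auto simp: field_simps)
  have "((\<lambda>t. \<phi> t powr m) has_real_derivative (c * \<phi> t - (Bf (t - c * r) - Df t) - \<alpha>) / D) (at t)"
    for t
    unfolding u_eq using P G2 \<open>D > 0\<close> unfolding G_def by (auto intro!: derivative_eq_intros)
  with Bf Df show thesis by (rule that)
qed

section \<open>Increasing profiles below a small level\<close>

lemma exists_between_ereal:
  fixes t1 :: ereal
  assumes "ereal x < t1" and "e > 0"
  obtains y where "x < y" "ereal y < t1" "y < x + e"
proof (cases t1)
  case (real T)
  with assms that show ?thesis
    by (intro that[of "min (x + e / 2) ((x + T) / 2)"]) (auto simp: min_def)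
next
  case PInf
  with assms that show ?thesis by (intro that[of "x + e / 2"]) auto
qed (use assms in simp)

locale monotone_profile =
  fixes m D c r B k v0 :: real and b d \<phi> Bf Df :: "real \<Rightarrow> real" and \<alpha> :: real and t1 :: ereal
  assumes m: "m \<ge> 1" and D: "D > 0" and c: "c > 0" and r: "r \<ge> 0" and B: "B \<ge> 0"
    and k: "k > 0" and v0: "v0 > 0"
    and b_nonneg: "\<And>x. x \<ge> 0 \<Longrightarrow> b x \<ge> 0"
    and b_minus_d_ge: "\<And>x. 0 \<le> x \<Longrightarrow> x \<le> v0 \<Longrightarrow> k * x \<le> b x - d x"
    and b_le: "\<And>x. 0 \<le> x \<Longrightarrow> x \<le> v0 \<Longrightarrow> b x \<le> B * x"
    and \<phi>: "continuous_on UNIV \<phi>" and \<phi>_nonneg: "\<And>t. \<phi> t \<ge> 0"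
    and \<phi>_tendsto_0: "(\<phi> \<longlongrightarrow> 0) at_bot"
    and \<phi>_mono: "\<And>x y. x \<le> y \<Longrightarrow> ereal y < t1 \<Longrightarrow> \<phi> x \<le> \<phi> y"
    and Bf: "\<And>t. (Bf has_real_derivative b (\<phi> t)) (at t)"
    and Df: "\<And>t. (Df has_real_derivative d (\<phi> t)) (at t)"
    and \<phi>_powr_m: "\<And>t. ((\<lambda>t. \<phi> t powr m) has_real_derivative
                     (c * \<phi> t - (Bf (t - c * r) - Df t) - \<alpha>) / D) (at t)"
begin

definition "\<tau> = c * r"
definition "C = c + \<tau> * B"
definition "u x = \<phi> x powr m"
definition "flux x = c * \<phi> x - (Bf (x - \<tau>) - Df x) - \<alpha>"

lemma \<tau>_nonneg: "\<tau> \<ge> 0"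
  using c r by (simp add: \<tau>_def)

lemma C_pos: "C > 0"
  unfolding C_def using c B \<tau>_nonneg by (simp add: add_pos_nonneg)

lemma flux_has_derivative: "((\<lambda>t. D * u t) has_real_derivative flux x) (at x)"
  using DERIV_cmult[OF \<phi>_powr_m, of D x] D by (simp add: u_def[abs_def] flux_def \<tau>_def)

lemma u_nonneg: "u x \<ge> 0"
  by (simp add: u_def)

lemma u_mono: "x \<le> y \<Longrightarrow> ereal y < t1 \<Longrightarrow> u x \<le> u y"
  unfolding u_def using \<phi>_mono \<phi>_nonneg m by (intro powr_mono2) auto

lemma flux_nonneg:
  assumes "ereal x < t1"
  shows "flux x \<ge> 0"
proof (rule ccontr)
  assume "\<not> flux x \<ge> 0"
  from DERIV_neg_dec_right[OF flux_has_derivative, of x] this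
  obtain \<delta> where "\<delta> > 0" and dec: "\<And>h. h > 0 \<Longrightarrow> h < \<delta> \<Longrightarrow> D * u (x + h) < D * u x"
    by force
  obtain y where "x < y" "ereal y < t1" "y < x + \<delta>"
    using exists_between_ereal[OF assms \<open>\<delta> > 0\<close>] .
  then have "D * u y < D * u x" and "u x \<le> u y"
    using dec[of "y - x"] u_mono[of x y] by simp_all
  then show False using D by (simp add: mult_le_cancel_left_pos)
qed

lemma flux_small_somewhere_left:
  assumes "\<delta> > 0"
  shows "\<exists>s\<le>s0. flux s < \<delta>"
proof (rule ccontr)
  assume "\<not> ?thesis"
  then have ge: "\<And>s. s \<le> s0 \<Longrightarrow> flux s \<ge> \<delta>" by force
  define s where "s = s0 - D * u s0 / \<delta> - 1"
  have "D * u s0 / \<delta> \<ge> 0" using u_nonneg[of s0] D assms by simp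
  then have "s \<le> s0" by (simp add: s_def)
  have "((\<lambda>y. D * u y - \<delta> * y) has_real_derivative flux y - \<delta>) (at y)" for y
    by (rule DERIV_diff[OF flux_has_derivative]) (auto intro!: derivative_eq_intros)
  then have "D * u s - \<delta> * s \<le> D * u s0 - \<delta> * s0"
    by (rule has_real_derivative_nonneg_imp_le) (use ge \<open>s \<le> s0\<close> in auto)
  moreover have "D * u s \<ge> 0" using u_nonneg D by simp
  moreover have "\<delta> * (s0 - s) = D * u s0 + \<delta>" using assms by (simp add: s_def field_simps)
  ultimately show False using assms by (simp add: algebra_simps)
qed

text \<open>Integrating the equation from \<open>s\<close> to \<open>x\<close>; the delay term is controlled by
  monotonicity of \<open>\<phi>\<close> and the linear bound \<open>b x \<le> B x\<close>.\<close>

lemma flux_increment_bound: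
  assumes "s \<le> x" and x: "ereal x < t1" and "\<phi> x \<le> v0"
  shows "flux x \<le> flux s + C * \<phi> x - ((Bf x - Df x) - (Bf s - Df s))"
proof -
  have "Bf (s - \<tau>) \<le> Bf s"
    by (rule has_real_derivative_nonneg_imp_le[OF Bf]) (use b_nonneg \<phi>_nonneg \<tau>_nonneg in auto)
  moreover have "Bf x - Bf (x - \<tau>) \<le> \<tau> * B * \<phi> x"
  proof -
    have "((\<lambda>y. Bf y - B * \<phi> x * y) has_real_derivative b (\<phi> y) - B * \<phi> x) (at y)" for y
      using Bf by (auto intro!: derivative_eq_intros)
    then have "Bf x - B * \<phi> x * x \<le> Bf (x - \<tau>) - B * \<phi> x * (x - \<tau>)"
    proof (rule has_real_derivative_nonpos_imp_ge)
      fix y assume "y \<in> {x - \<tau>..x}"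
      then have "\<phi> y \<le> \<phi> x" using \<phi>_mono x by auto
      then have "b (\<phi> y) \<le> B * \<phi> x"
        using b_le[of "\<phi> y"] \<phi>_nonneg \<open>\<phi> x \<le> v0\<close> B by (smt (verit) mult_left_mono)
      then show "b (\<phi> y) - B * \<phi> x \<le> 0" by simp
    qed (use \<tau>_nonneg in auto)
    then show ?thesis by (simp add: algebra_simps)
  qed
  moreover have "c * \<phi> s \<ge> 0" using c \<phi>_nonneg by simp
  ultimately show ?thesis unfolding flux_def C_def by (simp add: algebra_simps)
qed

lemma reaction_increment_bound:
  assumes "s \<le> x" and x: "ereal x < t1" and "\<phi> x \<le> v0"
    and Q: "\<And>t. (Q has_real_derivative \<phi> t) (at t)"
  shows "k * (Q x - Q s) \<le> (Bf x - Df x) - (Bf s - Df s)"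
proof -
  have "((\<lambda>y. (Bf y - Df y) - k * Q y) has_real_derivative (b (\<phi> y) - d (\<phi> y)) - k * \<phi> y) (at y)"
    for y using Bf Df Q by (auto intro!: derivative_eq_intros)
  then have "(Bf s - Df s) - k * Q s \<le> (Bf x - Df x) - k * Q x"
  proof (rule has_real_derivative_nonneg_imp_le)
    fix y assume "y \<in> {s..x}"
    then have "\<phi> y \<le> v0" using \<phi>_mono[of y x] x \<open>\<phi> x \<le> v0\<close> by auto
    then show "0 \<le> b (\<phi> y) - d (\<phi> y) - k * \<phi> y" using b_minus_d_ge[of "\<phi> y"] \<phi>_nonneg by auto
  qed (use assms in auto)
  then show ?thesis by (simp add: algebra_simps)
qed

lemma flux_le:
  assumes x: "ereal x < t1" and "\<phi> x \<le> v0"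
  shows "flux x \<le> C * \<phi> x"
proof (rule field_le_epsilon)
  fix \<delta> :: real assume "\<delta> > 0"
  obtain s where s: "s \<le> x" "flux s < \<delta>"
    using flux_small_somewhere_left[OF \<open>\<delta> > 0\<close>] by blast
  obtain Q where Q: "\<And>t. (Q has_real_derivative \<phi> t) (at t)"
    using continuous_has_antiderivative[OF \<phi>] by blast
  have "k * (Q x - Q s) \<ge> 0"
    using k has_real_derivative_nonneg_imp_le[OF Q _ s(1)] \<phi>_nonneg by simp
  then show "flux x \<le> C * \<phi> x + \<delta>"
    using flux_increment_bound[OF s(1) assms] reaction_increment_bound[OF s(1) assms Q] s(2)
    by linarith
qed

lemma u_increment_bound:
  assumes "s \<le> t" and t: "ereal t < t1" and "\<phi> t \<le> v0"
  shows "k * D * (u t - u s) \<le> C * (flux s + C * \<phi> t)"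
proof -
  obtain Q where Q: "\<And>t. (Q has_real_derivative \<phi> t) (at t)"
    using continuous_has_antiderivative[OF \<phi>] by blast
  have "((\<lambda>y. D * u y - C * Q y) has_real_derivative flux y - C * \<phi> y) (at y)" for y
    by (rule DERIV_diff[OF flux_has_derivative DERIV_cmult[OF Q]])
  then have "D * u t - C * Q t \<le> D * u s - C * Q s"
  proof (rule has_real_derivative_nonpos_imp_ge)
    fix y assume "y \<in> {s..t}"
    then have "ereal y < t1"
      using t by (meson atLeastAtMost_iff ereal_less_eq(3) order.strict_trans1)
    moreover have "\<phi> y \<le> v0"
      using \<open>y \<in> {s..t}\<close> t \<phi>_mono[of y t] \<open>\<phi> t \<le> v0\<close> by auto
    ultimately show "flux y - C * \<phi> y \<le> 0" using flux_le by simp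
  qed (use assms in simp)
  then have "D * (u t - u s) \<le> C * (Q t - Q s)"
    by (simp add: algebra_simps)
  then have "k * D * (u t - u s) \<le> C * (k * (Q t - Q s))"
    using mult_left_mono[of _ _ k] k by (simp add: ac_simps)
  also have "\<dots> \<le> C * (flux s + C * \<phi> t)"
    using flux_increment_bound[OF assms] reaction_increment_bound[OF assms Q] flux_nonneg[OF t] C_pos
    by (intro mult_left_mono) auto
  finally show ?thesis .
qed

lemma exists_small_u_flux:
  assumes "\<delta> > 0"
  obtains s where "s \<le> t" "u s < \<delta>" "flux s < \<delta>"
proof -
  have "\<forall>\<^sub>F s in at_bot. \<phi> s < min \<delta> 1"
    by (intro order_tendstoD(2)[OF \<phi>_tendsto_0]) (use assms in simp)
  then obtain s0 where s0: "\<And>s. s \<le> s0 \<Longrightarrow> \<phi> s < min \<delta> 1"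
    by (auto simp: eventually_at_bot_linorder)
  obtain s where s: "s \<le> min s0 t" "flux s < \<delta>"
    using flux_small_somewhere_left[OF assms] by blast
  have "u s \<le> \<phi> s"
    using s0[of s] s \<phi>_nonneg[of s] m unfolding u_def
    by (cases "\<phi> s = 0") (auto intro: powr_le_one_le)
  with s s0[of s] show thesis by (intro that) auto
qed

lemma k_D_u_le_C_sq_phi:
  assumes "ereal t < t1" and "\<phi> t \<le> v0"
  shows "k * D * u t \<le> C\<^sup>2 * \<phi> t"
proof (rule field_le_epsilon)
  fix e :: real assume "e > 0"
  have "k * D + C > 0" using k D C_pos by (simp add: add_pos_pos)
  define \<delta> where "\<delta> = e / (k * D + C)"
  have "\<delta> > 0" using \<open>e > 0\<close> \<open>k * D + C > 0\<close> by (simp add: \<delta>_def)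
  then obtain s where "s \<le> t" "u s < \<delta>" "flux s < \<delta>"
    using exists_small_u_flux by blast
  have "k * D * u t \<le> k * D * u s + C * flux s + C\<^sup>2 * \<phi> t"
    using u_increment_bound[OF \<open>s \<le> t\<close> assms] by (simp add: algebra_simps power2_eq_square)
  also have "\<dots> \<le> k * D * \<delta> + C * \<delta> + C\<^sup>2 * \<phi> t"
    using \<open>u s < \<delta>\<close> \<open>flux s < \<delta>\<close> k D C_pos
    by (intro add_mono mult_left_mono) auto
  also have "\<dots> = C\<^sup>2 * \<phi> t + (k * D + C) * \<delta>"
    by (simp add: algebra_simps)
  also have "\<dots> = C\<^sup>2 * \<phi> t + e"
    using \<open>k * D + C > 0\<close> by (simp add: \<delta>_def)
  finally show "k * D * u t \<le> C\<^sup>2 * \<phi> t + e" .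
qed

lemma exceeds_level:
  assumes "t1 = \<infinity>" and "\<epsilon> > 0" and "\<forall>\<^sub>F t in at_top. \<epsilon> \<le> \<phi> t"
  shows "\<exists>t. \<phi> t > v0"
proof (rule ccontr)
  assume "\<not> ?thesis"
  then have below: "\<And>t. \<phi> t \<le> v0" by (simp add: not_less)
  obtain T where T: "\<And>x. x \<ge> T \<Longrightarrow> \<epsilon> \<le> \<phi> x"
    using assms(3) by (auto simp: eventually_at_top_linorder)
  obtain Q where Q: "\<And>t. (Q has_real_derivative \<phi> t) (at t)"
    using continuous_has_antiderivative[OF \<phi>] by blast
  have "k * \<epsilon> > 0" using k assms(2) by simp
  define x where "x = T + (flux T + C * v0 + 1) / (k * \<epsilon>)"
  have "flux T \<ge> 0" using flux_nonneg assms(1) by simp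
  then have "T \<le> x" using C_pos v0 \<open>k * \<epsilon> > 0\<close> by (simp add: x_def)
  have "((\<lambda>y. Q y - \<epsilon> * y) has_real_derivative \<phi> y - \<epsilon>) (at y)" for y
    by (rule DERIV_diff[OF Q]) (auto intro!: derivative_eq_intros)
  then have "Q T - \<epsilon> * T \<le> Q x - \<epsilon> * x"
    by (rule has_real_derivative_nonneg_imp_le) (use T \<open>T \<le> x\<close> in auto)
  then have "k * (\<epsilon> * (x - T)) \<le> k * (Q x - Q T)"
    using k by (intro mult_left_mono) (simp_all add: algebra_simps)
  also have "\<dots> \<le> flux T + C * \<phi> x - flux x"
    using flux_increment_bound[OF \<open>T \<le> x\<close>] reaction_increment_bound[OF \<open>T \<le> x\<close> _ _ Q]
      assms(1) below by fastforce
  also have "\<dots> \<le> flux T + C * v0"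
    using flux_nonneg[of x] assms(1) mult_left_mono[OF below[of x] less_imp_le[OF C_pos]] by simp
  finally have "k * (\<epsilon> * (x - T)) \<le> flux T + C * v0" .
  moreover have "k * (\<epsilon> * (x - T)) = flux T + C * v0 + 1"
    using k \<open>\<epsilon> > 0\<close> by (simp add: x_def)
  ultimately show False by linarith
qed

lemma level_crossing:
  assumes "t1 \<noteq> -\<infinity>" and "t1 \<noteq> \<infinity> \<Longrightarrow> \<phi> (real_of_ereal t1) > v0"
    and "\<epsilon> > 0" and "\<forall>\<^sub>F t in at_top. \<epsilon> \<le> \<phi> t"
  obtains t where "ereal t < t1" and "\<phi> t = v0"
proof -
  obtain t' where t': "\<phi> t' > v0" "ereal t' \<le> t1"
  proof (cases t1)
    case (real T)
    then show thesis using that assms(2) by auto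
  next
    case PInf
    then show thesis using that exceeds_level[OF _ assms(3,4)] by auto
  qed (use assms(1) in simp)
  have "\<forall>\<^sub>F s in at_bot. \<phi> s < v0"
    using order_tendstoD(2)[OF \<phi>_tendsto_0 v0] .
  then obtain s0 where s0: "\<And>s. s \<le> s0 \<Longrightarrow> \<phi> s < v0"
    by (auto simp: eventually_at_bot_linorder)
  define s where "s = min s0 t'"
  have "\<phi> s \<le> v0" "s \<le> t'" using s0[of s] by (auto simp: s_def)
  then obtain t where "s \<le> t" "t \<le> t'" "\<phi> t = v0"
    using IVT'[of \<phi> s v0 t'] t'(1) \<phi> continuous_on_subset by fastforce
  moreover have "t \<noteq> t'" using \<open>\<phi> t = v0\<close> t'(1) by auto
  ultimately have "ereal t < ereal t'" by simp
  then have "ereal t < t1" using t'(2) by (rule less_le_trans)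
  from this \<open>\<phi> t = v0\<close> show thesis by (rule that)
qed

end

lemma has_real_derivative_on_nonneg_imp_continuous_on:
  assumes "\<forall>s\<ge>0. (f has_real_derivative f' s) (at s within {0..})"
  shows "continuous_on {0..} f"
  unfolding continuous_on_eq_continuous_within using assms by (auto intro: DERIV_continuous)

lemma birth_death_linear_bounds:
  assumes "death_rate_assms d d1 d2" and "birth_rate_assms b b1 d d1 \<kappa> sM"
  obtains k v0 B where "k > 0" "0 < v0" "v0 < \<kappa>" "B > 0"
    and "\<And>x. 0 \<le> x \<Longrightarrow> x \<le> v0 \<Longrightarrow> k * x \<le> b x - d x"
    and "\<And>x. 0 \<le> x \<Longrightarrow> x \<le> v0 \<Longrightarrow> b x \<le> B * x"
proof -
  have d: "\<forall>s\<ge>0. (d has_real_derivative d1 s) (at s within {0..})" and "d 0 = 0"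
    using assms(1) unfolding death_rate_assms_def by auto
  have b: "\<forall>s\<ge>0. (b has_real_derivative b1 s) (at s within {0..})" and "b 0 = 0"
    and "\<kappa> > 0" and "b1 0 > d1 0" and b_le: "\<forall>s. 0 < s \<and> s < \<kappa> \<longrightarrow> b s \<le> b1 0 * s"
    using assms(2) unfolding birth_rate_assms_def by auto
  define k where "k = (b1 0 - d1 0) / 2"
  have "k > 0" "k < b1 0 - d1 0" using \<open>b1 0 > d1 0\<close> by (simp_all add: k_def)
  have "((\<lambda>y. b y - d y) has_real_derivative b1 0 - d1 0) (at 0 within {0..})"
    using b d by (intro DERIV_diff) auto
  then have "((\<lambda>y. (b y - d y) / y) \<longlongrightarrow> b1 0 - d1 0) (at 0 within {0..})"
    using \<open>b 0 = 0\<close> \<open>d 0 = 0\<close> by (simp add: has_field_derivative_iff)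
  from order_tendstoD(1)[OF this \<open>k < b1 0 - d1 0\<close>]
  obtain \<delta> where "\<delta> > 0" and \<delta>: "\<And>x. x \<in> {0..} \<Longrightarrow> x \<noteq> 0 \<Longrightarrow> dist x 0 < \<delta> \<Longrightarrow> k < (b x - d x) / x"
    unfolding eventually_at by blast
  define v0 where "v0 = min (\<delta> / 2) (\<kappa> / 2)"
  have v0: "v0 > 0" "v0 < \<kappa>" "v0 < \<delta>" using \<open>\<delta> > 0\<close> \<open>\<kappa> > 0\<close> by (auto simp: v0_def)
  define B where "B = \<bar>b1 0\<bar> + 1"
  show thesis
  proof (rule that[OF \<open>k > 0\<close> v0(1,2)])
    show "B > 0" by (simp add: B_def add_nonneg_pos)
    fix x assume "0 \<le> x" "x \<le> v0"
    show "k * x \<le> b x - d x"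
    proof (cases "x = 0")
      case False
      then have "k < (b x - d x) / x" using \<delta>[of x] \<open>0 \<le> x\<close> \<open>x \<le> v0\<close> v0 by auto
      then show ?thesis using False \<open>0 \<le> x\<close> by (simp add: pos_less_divide_eq less_imp_le)
    qed (simp add: \<open>b 0 = 0\<close> \<open>d 0 = 0\<close>)
    show "b x \<le> B * x"
    proof (cases "x = 0")
      case False
      then have "b x \<le> b1 0 * x" using b_le \<open>0 \<le> x\<close> \<open>x \<le> v0\<close> v0 by auto
      also have "\<dots> \<le> B * x" using \<open>0 \<le> x\<close> by (intro mult_right_mono) (auto simp: B_def)
      finally show ?thesis .
    qed (simp add: \<open>b 0 = 0\<close>)
  qed
qed

lemma wave_solutionE:
  assumes "wave_solution m D b d \<kappa> c r \<phi>"
  obtains \<epsilon> t0 where "c > 0" and "continuous_on UNIV \<phi>" and "\<And>t. 0 \<le> \<phi> t"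
    and "wave_eq_distr m D b d c r \<phi>" and "(\<phi> \<longlongrightarrow> 0) at_bot"
    and "\<epsilon> > 0" and "\<forall>\<^sub>F t in at_top. \<epsilon> \<le> \<phi> t"
    and "t0 \<noteq> -\<infinity>" and "\<And>x y. x \<le> y \<Longrightarrow> ereal y < t0 \<Longrightarrow> \<phi> x \<le> \<phi> y"
    and "t0 \<noteq> \<infinity> \<Longrightarrow> \<phi> (real_of_ereal t0) > \<kappa>"
proof -
  from assms have "semi_wavefront m D b d \<kappa> c r \<phi>"
    unfolding wave_solution_def wavefront_def by blast
  then obtain \<epsilon> t0 where "\<epsilon> > 0" "\<forall>\<^sub>F t in at_top. \<epsilon> \<le> \<phi> t" "t0 \<noteq> -\<infinity>"
    and mono: "mono_on {t. ereal t < t0} \<phi>" and "t0 \<noteq> \<infinity> \<longrightarrow> \<phi> (real_of_ereal t0) > \<kappa>"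
    unfolding semi_wavefront_def by blast
  show thesis
  proof (rule that[of \<epsilon> t0])
    show "\<phi> x \<le> \<phi> y" if "x \<le> y" "ereal y < t0" for x y
    proof -
      have "ereal x < t0" using that by (meson ereal_less_eq(3) order.strict_trans1)
      then show ?thesis using mono_onD[OF mono] that by simp
    qed
  qed (use \<open>semi_wavefront m D b d \<kappa> c r \<phi>\<close> \<open>\<epsilon> > 0\<close> \<open>\<forall>\<^sub>F t in at_top. \<epsilon> \<le> \<phi> t\<close> \<open>t0 \<noteq> -\<infinity>\<close>
      \<open>t0 \<noteq> \<infinity> \<longrightarrow> \<phi> (real_of_ereal t0) > \<kappa>\<close> in \<open>auto simp: semi_wavefront_def\<close>)
qed

lemma no_slow_wave_solution:
  assumes "m \<ge> 1" and "D > 0" and b: "continuous_on {0..} b" and d: "continuous_on {0..} d"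
    and b_nonneg: "\<And>x. x \<ge> 0 \<Longrightarrow> b x \<ge> 0"
    and "k > 0" and "0 < v0" and "v0 < \<kappa>" and "B \<ge> 0"
    and b_minus_d_ge: "\<And>x. 0 \<le> x \<Longrightarrow> x \<le> v0 \<Longrightarrow> k * x \<le> b x - d x"
    and b_le: "\<And>x. 0 \<le> x \<Longrightarrow> x \<le> v0 \<Longrightarrow> b x \<le> B * x"
    and "r \<ge> 0" and slow: "(c * (1 + r * B))\<^sup>2 < k * D * v0 powr (m - 1)"
  shows "\<not> wave_solution m D b d \<kappa> c r \<phi>"
proof
  assume "wave_solution m D b d \<kappa> c r \<phi>"
  then show False
  proof (rule wave_solutionE)
    fix \<epsilon> t0 assume "c > 0" and \<phi>: "continuous_on UNIV \<phi>" and \<phi>_nonneg: "\<And>t. 0 \<le> \<phi> t"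
      and weq: "wave_eq_distr m D b d c r \<phi>" and \<phi>_tendsto_0: "(\<phi> \<longlongrightarrow> 0) at_bot"
      and "\<epsilon> > 0" and "\<forall>\<^sub>F t in at_top. \<epsilon> \<le> \<phi> t" and "t0 \<noteq> -\<infinity>"
      and \<phi>_mono: "\<And>x y. x \<le> y \<Longrightarrow> ereal y < t0 \<Longrightarrow> \<phi> x \<le> \<phi> y"
      and above: "t0 \<noteq> \<infinity> \<Longrightarrow> \<phi> (real_of_ereal t0) > \<kappa>"
    have "m > 0" using \<open>m \<ge> 1\<close> by simp
    obtain Bf Df \<alpha> where Bf: "\<And>t. (Bf has_real_derivative b (\<phi> t)) (at t)"
      and Df: "\<And>t. (Df has_real_derivative d (\<phi> t)) (at t)"
      and \<phi>_powr_m: "\<And>t. ((\<lambda>t. \<phi> t powr m) has_real_derivative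
        (c * \<phi> t - (Bf (t - c * r) - Df t) - \<alpha>) / D) (at t)"
      using wave_eq_distr_regularity[OF b d \<phi> \<phi>_nonneg \<open>m > 0\<close> \<open>D > 0\<close> weq] by blast
    interpret monotone_profile m D c r B k v0 b d \<phi> Bf Df \<alpha> t0
      using \<open>m \<ge> 1\<close> \<open>D > 0\<close> \<open>c > 0\<close> \<open>r \<ge> 0\<close> \<open>B \<ge> 0\<close> \<open>k > 0\<close> \<open>0 < v0\<close> b_nonneg
        b_minus_d_ge b_le \<phi> \<phi>_nonneg \<phi>_tendsto_0 \<phi>_mono Bf Df \<phi>_powr_m
      by unfold_locales
    have "t0 \<noteq> \<infinity> \<Longrightarrow> \<phi> (real_of_ereal t0) > v0"
      using above \<open>v0 < \<kappa>\<close> by simp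
    then obtain t where "ereal t < t0" "\<phi> t = v0"
      using level_crossing[OF \<open>t0 \<noteq> -\<infinity>\<close>] \<open>\<epsilon> > 0\<close> \<open>\<forall>\<^sub>F t in at_top. \<epsilon> \<le> \<phi> t\<close> by blast
    have "u t = v0 powr (m - 1) * v0"
      unfolding u_def \<open>\<phi> t = v0\<close> using powr_add[of v0 "m - 1" 1] \<open>0 < v0\<close> by simp
    then have "k * D * v0 powr (m - 1) * v0 \<le> C\<^sup>2 * v0"
      using k_D_u_le_C_sq_phi[OF \<open>ereal t < t0\<close>] \<open>\<phi> t = v0\<close> by (simp add: mult.assoc)
    then have "k * D * v0 powr (m - 1) \<le> C\<^sup>2" using \<open>0 < v0\<close> by simp
    moreover have "C = c * (1 + r * B)" unfolding C_def \<tau>_def by (simp add: algebra_simps)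
    ultimately show False using slow by simp
  qed
qed

theorem theorem2p2:
  fixes m D \<kappa> sM :: real and b b1 d d1 d2 :: "real \<Rightarrow> real"
  assumes "m > 1" and "D > 0"
    and "death_rate_assms d d1 d2"
    and "birth_rate_assms b b1 d d1 \<kappa> sM"
  shows "\<exists>\<mu>0 > 0. \<exists>cdot :: real \<Rightarrow> real.
           (\<forall>r\<ge>0. cdot r > 0 \<and>
              (\<forall>c. 0 < c \<and> c < cdot r \<longrightarrow> \<not> (\<exists>\<phi>. wave_solution m D b d \<kappa> c r \<phi>))) \<and>
           ((\<lambda>r. r * cdot r) \<longlongrightarrow> \<mu>0) at_top"
proof -
  obtain k v0 B where "k > 0" "0 < v0" "v0 < \<kappa>" "B > 0"
    and bounds: "\<And>x. 0 \<le> x \<Longrightarrow> x \<le> v0 \<Longrightarrow> k * x \<le> b x - d x"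
      "\<And>x. 0 \<le> x \<Longrightarrow> x \<le> v0 \<Longrightarrow> b x \<le> B * x"
    using birth_death_linear_bounds[OF assms(3,4)] by blast
  have "\<forall>s\<ge>0. (d has_real_derivative d1 s) (at s within {0..})"
    and "\<forall>s\<ge>0. (b has_real_derivative b1 s) (at s within {0..})" and b_nonneg: "\<forall>s\<ge>0. b s \<ge> 0"
    using assms(3,4) unfolding death_rate_assms_def birth_rate_assms_def by auto
  then have b: "continuous_on {0..} b" and d: "continuous_on {0..} d"
    by (auto intro: has_real_derivative_on_nonneg_imp_continuous_on)
  define \<mu> where "\<mu> = sqrt (k * D * v0 powr (m - 1))"
  have "\<mu> > 0" and \<mu>2: "\<mu>\<^sup>2 = k * D * v0 powr (m - 1)"
    using \<open>k > 0\<close> \<open>D > 0\<close> \<open>0 < v0\<close> by (simp_all add: \<mu>_def)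
  define cdot where "cdot r = \<mu> / (1 + r * B)" for r
  have "cdot r > 0 \<and> (\<forall>c. 0 < c \<and> c < cdot r \<longrightarrow> \<not> (\<exists>\<phi>. wave_solution m D b d \<kappa> c r \<phi>))"
    if "r \<ge> 0" for r
  proof (intro conjI allI impI)
    have "1 + r * B > 0" using that \<open>B > 0\<close> by (simp add: add_pos_nonneg)
    then show "cdot r > 0" using \<open>\<mu> > 0\<close> by (simp add: cdot_def)
    fix c assume "0 < c \<and> c < cdot r"
    then have "(c * (1 + r * B))\<^sup>2 < k * D * v0 powr (m - 1)"
      unfolding \<mu>2[symmetric] using \<open>1 + r * B > 0\<close>
      by (intro power_strict_mono) (auto simp: cdot_def pos_less_divide_eq)
    then show "\<not> (\<exists>\<phi>. wave_solution m D b d \<kappa> c r \<phi>)"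
      using no_slow_wave_solution[OF _ \<open>D > 0\<close> b d _ \<open>k > 0\<close> \<open>0 < v0\<close> \<open>v0 < \<kappa>\<close> _ bounds \<open>r \<ge> 0\<close>]
        \<open>m > 1\<close> \<open>B > 0\<close> b_nonneg by auto
  qed
  moreover have "((\<lambda>r. r * cdot r) \<longlongrightarrow> \<mu> / B) at_top"
  proof (rule Lim_transform_eventually)
    have "((\<lambda>r. \<mu> / (inverse r + B)) \<longlongrightarrow> \<mu> / (0 + B)) at_top"
      using \<open>B > 0\<close> by (intro tendsto_intros tendsto_inverse_0_at_top filterlim_ident) auto
    then show "((\<lambda>r. \<mu> / (inverse r + B)) \<longlongrightarrow> \<mu> / B) at_top" by simp
    show "\<forall>\<^sub>F r in at_top. \<mu> / (inverse r + B) = r * cdot r"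
      using eventually_gt_at_top[of 0] by eventually_elim (simp add: cdot_def field_simps)
  qed
  moreover have "\<mu> / B > 0" using \<open>\<mu> > 0\<close> \<open>B > 0\<close> by simp
  ultimately show ?thesis by blast
qed

end
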